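(* Let $G$ be a graph that is well-separable with respect to a set $\mathcal P$ of principal $k$-profiles, let $P,P'\in\mathcal P$ and let $(A,B)\in\mathcal R_{\rm eff}(P,P')$. Then there is a component $X$ of $G[A\setminus B]$ such that $(X\cup N(X),V(G)\setminus X)\in\mathcal R_{\rm eff}(P,P')$.
   Context: A separation of $G$ is an ordered pair $(A,B)$ of subsets of $V(G)$ with $A\cup B=V(G)$ and no edge between $A\setminus B$ and $B\setminus A$; its order is $|A\cap B|$. $(A,B)\le(C,D)$ means $A\subseteq C$, $D\subseteq B$. A profile is a set $P$ of separations with (P1) if $(C,D)\le(A,B)\in P$ then $(D,C)\notin P$, and (P2) if $(A,B),(C,D)\in P$ then $(B\cap D,A\cup C)\notin P$. $P$ is principal if for every family $((A_i,B_i))_{i\in I}$ in $P$ with all $A_i\cap B_i$ equal, $\bigcap_{i\in I}(B_i\setminus A_i)\neq\emptyset$. $P$ is a $k$-profile if all its separations have order $<k$ and for each separation $(A,B)$ of order $<k$, $(A,B)\in P$ or $(B,A)\in P$. A separation $(A,B)$ distinguishes $P,P'$ if $(A,B)\in P,(B,A)\in P'$ or vice versa, efficiently if no separation of smaller order distinguishes them. $\kappa(\mathcal P,G)$ is the minimum order of a separation distinguishing two profiles of $\mathcal P$. $\mathcal R_{\rm eff}(P,P')$ is the set of separations of order $\kappa(\mathcal P,G)$ distinguishing $P$ and $P'$ efficiently. $\mathcal R(k,\mathcal P,G)$ is the set of separations of finite order at most $k$ distinguishing two profiles of $\mathcal P$. A component $C$ of $G-(A\cap B)$ is degenerated if $N(C)\subsetneq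 A\cap B$. $G$ is well-separable with respect to $\mathcal P$ if for no separation $(A,B)\in\mathcal R(\kappa(\mathcal P,G),\mathcal P,G)$ does $G-(A\cap B)$ have a degenerated component (the paper phrases this as: for every separation of order $\kappa(\mathcal P,G)$ no component of $G-(A\cap B)$ is degenerated, that is, the set of separations $(C\cup N(C),V(G)\setminus C)$ with $C$ a degenerated component for a separation in $\mathcal R(\kappa(\mathcal P,G),\mathcal P,G)$ is empty). *)

theory Defs
  imports Main "HOL-Library.Extended_Nat"
begin

definition graph :: "'a set \<Rightarrow> ('a \<Rightarrow> 'a \<Rightarrow> bool) \<Rightarrow> bool" where
  "graph V E \<longleftrightarrow> (\<forall>x y. E x y \<longrightarrow> x \<in> V \<and> y \<in> V \<and> E y x \<and> x \<noteq> y)"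

type_synonym 'a sep = "'a set \<times> 'a set"

definition separation :: "'a set \<Rightarrow> ('a \<Rightarrow> 'a \<Rightarrow> bool) \<Rightarrow> 'a sep \<Rightarrow> bool" where
  "separation V E s \<longleftrightarrow> (case s of (A, B) \<Rightarrow>
     A \<union> B = V \<and> (\<forall>x\<in>A - B. \<forall>y\<in>B - A. \<not> E x y))"

definition order :: "'a sep \<Rightarrow> enat" where
  "order s = (case s of (A, B) \<Rightarrow> if finite (A \<inter> B) then enat (card (A \<inter> B)) else \<infinity>)"

definition sep_le :: "'a sep \<Rightarrow> 'a sep \<Rightarrow> bool" where
  "sep_le s t \<longleftrightarrow> (case s of (A, B) \<Rightarrow> case t of (C, D) \<Rightarrow> A \<subseteq> C \<and> D \<subseteq> B)"

definition inv_sep :: "'a sep \<Rightarrow> 'a sep" where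
  "inv_sep s = (snd s, fst s)"

definition profile :: "'a set \<Rightarrow> ('a \<Rightarrow> 'a \<Rightarrow> bool) \<Rightarrow> 'a sep set \<Rightarrow> bool" where
  "profile V E P \<longleftrightarrow>
     (\<forall>s\<in>P. separation V E s) \<and>
     (\<forall>A B C D. (C, D) \<in> P \<and> sep_le (A, B) (C, D) \<longrightarrow> (B, A) \<notin> P) \<and>
     (\<forall>A B C D. (A, B) \<in> P \<and> (C, D) \<in> P \<longrightarrow> (B \<inter> D, A \<union> C) \<notin> P)"

definition principal :: "'a sep set \<Rightarrow> bool" where
  "principal P \<longleftrightarrow>
     (\<forall>Q. Q \<subseteq> P \<and> Q \<noteq> {} \<and> (\<forall>(A, B)\<in>Q. \<forall>(C, D)\<in>Q. A \<inter> B = C \<inter> D)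
        \<longrightarrow> (\<Inter>(A, B)\<in>Q. B - A) \<noteq> {})"

definition k_profile :: "'a set \<Rightarrow> ('a \<Rightarrow> 'a \<Rightarrow> bool) \<Rightarrow> nat \<Rightarrow> 'a sep set \<Rightarrow> bool" where
  "k_profile V E k P \<longleftrightarrow> profile V E P \<and>
     (\<forall>s\<in>P. order s < enat k) \<and>
     (\<forall>A B. separation V E (A, B) \<and> order (A, B) < enat k \<longrightarrow> (A, B) \<in> P \<or> (B, A) \<in> P)"

definition distinguishes :: "'a sep \<Rightarrow> 'a sep set \<Rightarrow> 'a sep set \<Rightarrow> bool" where
  "distinguishes s P P' \<longleftrightarrow> (s \<in> P \<and> inv_sep s \<in> P') \<or> (inv_sep s \<in> P \<and> s \<in> P')"

definition distinguishes_eff ::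
    "'a set \<Rightarrow> ('a \<Rightarrow> 'a \<Rightarrow> bool) \<Rightarrow> 'a sep \<Rightarrow> 'a sep set \<Rightarrow> 'a sep set \<Rightarrow> bool" where
  "distinguishes_eff V E s P P' \<longleftrightarrow> separation V E s \<and> distinguishes s P P' \<and>
     (\<forall>t. separation V E t \<and> order t < order s \<longrightarrow> \<not> distinguishes t P P')"

text \<open>\<kappa>(\<P>,G): minimum order of a separation distinguishing two profiles of \<P>
  (\<infinity> if there is none).\<close>
definition kappa :: "'a set \<Rightarrow> ('a \<Rightarrow> 'a \<Rightarrow> bool) \<Rightarrow> 'a sep set set \<Rightarrow> enat" where
  "kappa V E \<P> = Inf {order s | s P P'. P \<in> \<P> \<and> P' \<in> \<P> \<and> separation V E s \<and> distinguishes s P P'}"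

definition R_eff ::
    "'a set \<Rightarrow> ('a \<Rightarrow> 'a \<Rightarrow> bool) \<Rightarrow> 'a sep set set \<Rightarrow> 'a sep set \<Rightarrow> 'a sep set \<Rightarrow> 'a sep set" where
  "R_eff V E \<P> P P' = {s. order s = kappa V E \<P> \<and> distinguishes_eff V E s P P'}"

definition R_sep :: "'a set \<Rightarrow> ('a \<Rightarrow> 'a \<Rightarrow> bool) \<Rightarrow> enat \<Rightarrow> 'a sep set set \<Rightarrow> 'a sep set" where
  "R_sep V E k \<P> = {s. separation V E s \<and> order s \<noteq> \<infinity> \<and> order s \<le> k \<and>
     (\<exists>P\<in>\<P>. \<exists>P'\<in>\<P>. distinguishes s P P')}"

definition component :: "'a set \<Rightarrow> ('a \<Rightarrow> 'a \<Rightarrow> bool) \<Rightarrow> 'a set \<Rightarrow> 'a set \<Rightarrow> bool" where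
  "component V E S C \<longleftrightarrow> S \<subseteq> V \<and>
     (\<exists>x\<in>S. C = {y. (x, y) \<in> {(u, v). u \<in> S \<and> v \<in> S \<and> E u v}\<^sup>*})"

definition nbh :: "'a set \<Rightarrow> ('a \<Rightarrow> 'a \<Rightarrow> bool) \<Rightarrow> 'a set \<Rightarrow> 'a set" where
  "nbh V E X = {y \<in> V - X. \<exists>x\<in>X. E x y}"

definition degenerated :: "'a set \<Rightarrow> ('a \<Rightarrow> 'a \<Rightarrow> bool) \<Rightarrow> 'a sep \<Rightarrow> 'a set \<Rightarrow> bool" where
  "degenerated V E s C \<longleftrightarrow> (case s of (A, B) \<Rightarrow>
     component V E (V - (A \<inter> B)) C \<and> nbh V E C \<subset> A \<inter> B)"

definition well_separable :: "'a set \<Rightarrow> ('a \<Rightarrow> 'a \<Rightarrow> bool) \<Rightarrow> 'a sep set set \<Rightarrow> bool" where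
  "well_separable V E \<P> \<longleftrightarrow>
     (\<forall>s\<in>R_sep V E (kappa V E \<P>) \<P>. \<not> (\<exists>C. degenerated V E s C))"

end

theory Submission
  imports Defs
begin

text \<open>Orient (A,B) so that (A,B) \<in> P and (B,A) \<in> P', and let S = A \<inter> B. If every component X
  of G[A - B] had (X \<union> S, V - X) \<in> P', then together with (B,A) these separations all have
  separator S, and principality of P' yields a vertex of A - B lying in no component.
  So some X has (V - X, X \<union> S) \<in> P'. Its neighbourhood N lies in S, and
  (X \<union> N, V - X) \<le> (A,B) puts this separation into P, while the profile axioms force its
  inverse into P'. It distinguishes P and P' with order |N| \<le> |S|, so efficiency of (A,B)
  gives equality.\<close>

lemma distinguishes_sym: "distinguishes s P P' \<longleftrightarrow> distinguishes s P' P"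
  unfolding distinguishes_def by blast

lemma distinguishes_eff_sym: "distinguishes_eff V E s P P' \<longleftrightarrow> distinguishes_eff V E s P' P"
  unfolding distinguishes_eff_def using distinguishes_sym by blast

lemma order_mono:
  assumes "A \<inter> B \<subseteq> C \<inter> D"
  shows "order (A, B) \<le> order (C, D)"
proof (cases "finite (C \<inter> D)")
  case True
  moreover from True assms have "finite (A \<inter> B)" by (rule finite_subset[rotated])
  ultimately show ?thesis using assms by (simp add: order_def card_mono)
qed (simp add: order_def)

lemma separation_union_nbh:
  assumes "X \<subseteq> V" "S \<subseteq> V" "nbh V E X \<subseteq> S"
  shows "separation V E (X \<union> S, V - X)"
  using assms unfolding separation_def nbh_def by blast

definition component_of :: "('a \<Rightarrow> 'a \<Rightarrow> bool) \<Rightarrow> 'a set \<Rightarrow> 'a \<Rightarrow> 'a set" where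
  "component_of E S x = {y. (x, y) \<in> {(u, v). u \<in> S \<and> v \<in> S \<and> E u v}\<^sup>*}"

lemma in_component_of_self: "x \<in> component_of E S x"
  by (simp add: component_of_def)

lemma component_of_subset:
  assumes "x \<in> S"
  shows "component_of E S x \<subseteq> S"
proof
  fix y assume "y \<in> component_of E S x"
  then have "(x, y) \<in> {(u, v). u \<in> S \<and> v \<in> S \<and> E u v}\<^sup>*"
    unfolding component_of_def by (rule CollectD)
  then show "y \<in> S" by (rule rtranclE) (use assms in blast)+
qed

lemma component_of_closed:
  assumes "x \<in> S" "y \<in> component_of E S x" "E y z" "z \<in> S"
  shows "z \<in> component_of E S x"
proof -
  let ?R = "{(u, v). u \<in> S \<and> v \<in> S \<and> E u v}"
  have "y \<in> S" using component_of_subset[OF assms(1)] assms(2) by (rule subsetD)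
  with assms(3,4) have "(y, z) \<in> ?R" by blast
  moreover have "(x, y) \<in> ?R\<^sup>*" using assms(2) unfolding component_of_def by (rule CollectD)
  ultimately have "(x, z) \<in> ?R\<^sup>*" by (rule rtrancl_into_rtrancl[rotated])
  then show ?thesis unfolding component_of_def by (rule CollectI)
qed

lemma component_component_of: "S \<subseteq> V \<Longrightarrow> x \<in> S \<Longrightarrow> component V E S (component_of E S x)"
  unfolding component_def component_of_def by auto

lemma nbh_component_of_subset_separator:
  assumes "separation V E (A, B)" "x \<in> A - B"
  shows "nbh V E (component_of E (A - B) x) \<subseteq> A \<inter> B"
proof
  fix y assume "y \<in> nbh V E (component_of E (A - B) x)"
  then obtain z where y: "y \<in> V" "y \<notin> component_of E (A - B) x"
    and z: "z \<in> component_of E (A - B) x" "E z y"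
    unfolding nbh_def by blast
  have "y \<notin> A - B" using component_of_closed[OF assms(2) z] y(2) by blast
  moreover have "y \<notin> B - A"
    using assms z component_of_subset[OF assms(2)] unfolding separation_def by blast
  ultimately show "y \<in> A \<inter> B" using y(1) assms(1) unfolding separation_def by blast
qed

context
  fixes V :: "'a set" and E :: "'a \<Rightarrow> 'a \<Rightarrow> bool" and k :: nat and P :: "'a sep set"
  assumes k_profile: "k_profile V E k P"
begin

lemma k_profile_separation: "s \<in> P \<Longrightarrow> separation V E s"
  using k_profile unfolding k_profile_def profile_def by blast

lemma k_profile_order_less: "s \<in> P \<Longrightarrow> order s < enat k"
  using k_profile unfolding k_profile_def by blast

lemma k_profile_orient:
  "separation V E (A, B) \<Longrightarrow> order (A, B) < enat k \<Longrightarrow> (A, B) \<in> P \<or> (B, A) \<in> P"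
  using k_profile unfolding k_profile_def by blast

lemma k_profile_down_closed:
  assumes "(C, D) \<in> P" "separation V E (A, B)" "sep_le (A, B) (C, D)"
    and "order (A, B) \<le> order (C, D)"
  shows "(A, B) \<in> P"
proof -
  have "(B, A) \<notin> P" using k_profile assms(1,3) unfolding k_profile_def profile_def by blast
  moreover have "order (A, B) < enat k"
    using assms(4) k_profile_order_less[OF assms(1)] by (rule le_less_trans)
  ultimately show ?thesis using k_profile_orient[OF assms(2)] by blast
qed

lemma k_profile_separator_in:
  assumes "(C, D) \<in> P"
  shows "(C \<inter> D, V) \<in> P"
proof (rule k_profile_down_closed[OF assms])
  have "C \<union> D = V" using k_profile_separation[OF assms] unfolding separation_def by simp
  then show "separation V E (C \<inter> D, V)" and "sep_le (C \<inter> D, V) (C, D)"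
    unfolding separation_def sep_le_def by auto
  show "order (C \<inter> D, V) \<le> order (C, D)"
    using \<open>C \<union> D = V\<close> by (intro order_mono) auto
qed

text \<open>(C \<inter> D, V) lies in P, but the profile axiom (P2) applied to (C,D) and (D',C) excludes it.\<close>
lemma k_profile_reverse_cover_notin:
  assumes "(C, D) \<in> P" "C \<union> D' = V"
  shows "(D', C) \<notin> P"
proof
  assume "(D', C) \<in> P"
  then have "(D \<inter> C, C \<union> D') \<notin> P"
    using k_profile assms(1) unfolding k_profile_def profile_def by blast
  with k_profile_separator_in[OF assms(1)] assms(2) show False by (simp add: Int_commute)
qed

end

lemma principal_component_not_in:
  assumes "principal P" "(B, A) \<in> P" "separation V E (A, B)"
  obtains x where "x \<in> A - B"
    "(component_of E (A - B) x \<union> (A \<inter> B), V - component_of E (A - B) x) \<notin> P"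
proof (rule ccontr)
  let ?X = "component_of E (A - B)"
  let ?Q = "insert (B, A) ((\<lambda>x. (?X x \<union> (A \<inter> B), V - ?X x)) ` (A - B))"
  assume "\<not> thesis"
  with that have "\<forall>x\<in>A - B. (?X x \<union> (A \<inter> B), V - ?X x) \<in> P" by blast
  with assms(2) have "?Q \<subseteq> P" by blast
  moreover have "A \<union> B = V" using assms(3) unfolding separation_def by simp
  then have "(?X x \<union> (A \<inter> B)) \<inter> (V - ?X x) = A \<inter> B" if "x \<in> A - B" for x
    using component_of_subset[OF that] by blast
  then have "\<forall>(C, D)\<in>?Q. C \<inter> D = A \<inter> B" by auto
  then have "\<forall>(C, D)\<in>?Q. \<forall>(C', D')\<in>?Q. C \<inter> D = C' \<inter> D'"
    by (simp add: case_prod_beta)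
  ultimately have "(\<Inter>(C, D)\<in>?Q. D - C) \<noteq> {}"
    using assms(1) unfolding principal_def by blast
  then obtain z where z: "z \<in> (\<Inter>(C, D)\<in>?Q. D - C)" by blast
  then have "z \<in> A - B" by blast
  then have "(?X z \<union> (A \<inter> B), V - ?X z) \<in> ?Q" by blast
  with z have "z \<notin> ?X z" by blast
  then show False using in_component_of_self by metis
qed

lemma distinguishes_eff_component:
  assumes P1: "k_profile V E k P1" and P2: "k_profile V E k P2" "principal P2"
    and AB: "(A, B) \<in> P1" "(B, A) \<in> P2" and eff: "distinguishes_eff V E (A, B) P1 P2"
  obtains X where "component V E (A - B) X"
    "distinguishes_eff V E (X \<union> nbh V E X, V - X) P1 P2"
    "order (X \<union> nbh V E X, V - X) = order (A, B)"
proof -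
  have sep: "separation V E (A, B)" using eff unfolding distinguishes_eff_def by simp
  then have V: "A \<union> B = V" unfolding separation_def by simp
  obtain x where x: "x \<in> A - B"
    and notin: "(component_of E (A - B) x \<union> (A \<inter> B), V - component_of E (A - B) x) \<notin> P2"
    using principal_component_not_in[OF P2(2) AB(2) sep] by blast
  define X where "X = component_of E (A - B) x"
  define N where "N = nbh V E X"
  have XAB: "X \<subseteq> A - B" unfolding X_def using component_of_subset[OF x] .
  have NS: "N \<subseteq> A \<inter> B" unfolding N_def X_def using nbh_component_of_subset_separator[OF sep x] .
  have XN_sep: "separation V E (X \<union> N, V - X)"
    unfolding N_def using XAB V by (intro separation_union_nbh) (auto simp: nbh_def)
  have XN_order: "order (X \<union> N, V - X) \<le> order (A, B)"
    using NS XAB by (intro order_mono) (auto simp: N_def nbh_def)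
  have "(X \<union> (A \<inter> B)) \<inter> (V - X) = A \<inter> B" using XAB V by blast
  then have XS_order: "order (X \<union> (A \<inter> B), V - X) = order (A, B)" by (simp add: order_def)
  have XS_sep: "separation V E (X \<union> (A \<inter> B), V - X)"
    using XAB V NS by (intro separation_union_nbh) (auto simp: N_def)
  have XS_in_P2: "(V - X, X \<union> (A \<inter> B)) \<in> P2"
    using k_profile_orient[OF P2(1) XS_sep] XS_order k_profile_order_less[OF P1 AB(1)]
      notin[folded X_def] by auto
  have "(V - X) \<union> (X \<union> N) = V" using XAB V NS by blast
  with XS_in_P2 have "(X \<union> N, V - X) \<notin> P2" by (rule k_profile_reverse_cover_notin[OF P2(1)])
  then have in_P2: "(V - X, X \<union> N) \<in> P2"
    using k_profile_orient[OF P2(1) XN_sep] XN_order k_profile_order_less[OF P1 AB(1)]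
    by (auto dest: le_less_trans)
  have in_P1: "(X \<union> N, V - X) \<in> P1"
    using k_profile_down_closed[OF P1 AB(1) XN_sep] XN_order XAB NS V by (auto simp: sep_le_def)
  have dist: "distinguishes (X \<union> N, V - X) P1 P2"
    using in_P1 in_P2 by (simp add: distinguishes_def inv_sep_def)
  then have "\<not> order (X \<union> N, V - X) < order (A, B)"
    using eff XN_sep unfolding distinguishes_eff_def by blast
  with XN_order have order_eq: "order (X \<union> N, V - X) = order (A, B)" by simp
  have "distinguishes_eff V E (X \<union> N, V - X) P1 P2"
    using eff XN_sep dist unfolding order_eq distinguishes_eff_def by blast
  with order_eq component_component_of[of "A - B" V x E] x V that show ?thesis
    unfolding N_def X_def by blast
qed

theorem lemma2p7:
  fixes V :: "'a set" and E :: "'a \<Rightarrow> 'a \<Rightarrow> bool" and k :: nat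
    and \<P> :: "'a sep set set" and P P' :: "'a sep set" and A B :: "'a set"
  assumes "graph V E"
    and "\<forall>Q\<in>\<P>. k_profile V E k Q \<and> principal Q"
    and "well_separable V E \<P>"
    and "P \<in> \<P>" and "P' \<in> \<P>"
    and "(A, B) \<in> R_eff V E \<P> P P'"
  shows "\<exists>X. component V E (A - B) X \<and> (X \<union> nbh V E X, V - X) \<in> R_eff V E \<P> P P'"
proof -
  have kappa: "order (A, B) = kappa V E \<P>" and eff: "distinguishes_eff V E (A, B) P P'"
    using assms(6) by (simp_all add: R_eff_def)
  have profiles: "k_profile V E k P" "principal P" "k_profile V E k P'" "principal P'"
    using assms(2,4,5) by auto
  obtain X where "component V E (A - B) X"
    "distinguishes_eff V E (X \<union> nbh V E X, V - X) P P'"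
    "order (X \<union> nbh V E X, V - X) = order (A, B)"
  proof (cases "(A, B) \<in> P \<and> (B, A) \<in> P'")
    case True
    then show ?thesis using distinguishes_eff_component[OF profiles(1,3,4) _ _ eff] that by blast
  next
    case False
    with eff have "(A, B) \<in> P'" "(B, A) \<in> P"
      by (auto simp: distinguishes_eff_def distinguishes_def inv_sep_def)
    then show ?thesis
      using distinguishes_eff_component[OF profiles(3,1,2)] eff that distinguishes_eff_sym
      by metis
  qed
  with kappa show ?thesis by (auto simp: R_eff_def)
qed

end
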